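(* Let an operational theory contain binary-outcome measurements $\mathcal{M}_1,\mathcal{M}_2,\mathcal{M}_3$ (outcomes $X_i\in\{0,1\}$) that are pairwise jointly measurable via joint measurements $\mathcal{M}_{12},\mathcal{M}_{13},\mathcal{M}_{23}$, and a preparation $\mathcal{P}_*$ with $p(X_i=0,X_j=1|\mathcal{M}_{ij};\mathcal{P}_* )=p(X_i=1,X_j=0|\mathcal{M}_{ij};\mathcal{P}_* )=\tfrac12$ for all $i\neq j$. Then there is no ontological model reproducing these statistics that is measurement-noncontextual and outcome-deterministic (for $\mathcal{M}_1,\mathcal{M}_2,\mathcal{M}_3,\mathcal{M}_{12},\mathcal{M}_{13},\mathcal{M}_{23}$).
   Context: An operational theory assigns outcome probabilities $p(X|M;P)$ to preparation procedures $P$ and measurement procedures $M$; measurements $\mathcal{M}$ (preparations $\mathcal{P}$) are equivalence classes of procedures with identical statistics. A joint measurement $\mathcal{M}_{ij}$ of $\mathcal{M}_i,\mathcal{M}_j$ has outcome $(X_i,X_j)$ whose marginals reproduce the statistics of $\mathcal{M}_i$ and $\mathcal{M}_j$ for every preparation. An ontological model specifies ontic states $\lambda\in\Lambda$, distributions $p(\lambda|P)$ and response functions $p(X|M;\lambda)$ with $p(X|M;P)=\sum_\lambda p(X|M;\lambda)p(\lambda|P)$. It is measurement-noncontextual if the response function of a procedure depends only on its equivalence class, and outcome-deterministic for a measurement if its response function takes values in $\{0,1\}$. *)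

theory Defs
  imports "HOL-Probability.Probability_Mass_Function"
begin

text \<open>Outcomes of binary measurements are bool (False = 0, True = 1);
joint outcomes (X_i, X_j) are bool \<times> bool.\<close>

definition meas_class :: "('m \<Rightarrow> 'p \<Rightarrow> 'x \<Rightarrow> real) \<Rightarrow> 'm set \<Rightarrow> bool" where
  "meas_class pr A \<longleftrightarrow> A \<noteq> {} \<and>
     (\<forall>m\<in>A. \<forall>m'. m' \<in> A \<longleftrightarrow> (\<forall>P x. pr m' P x = pr m P x))"

definition prep_class ::
  "('m \<Rightarrow> 'p \<Rightarrow> bool \<Rightarrow> real) \<Rightarrow> ('j \<Rightarrow> 'p \<Rightarrow> bool \<times> bool \<Rightarrow> real) \<Rightarrow> 'p set \<Rightarrow> bool" where
  "prep_class pr1 pr2 Ps \<longleftrightarrow> Ps \<noteq> {} \<and>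
     (\<forall>P\<in>Ps. \<forall>P'. P' \<in> Ps \<longleftrightarrow>
        ((\<forall>m x. pr1 m P' x = pr1 m P x) \<and> (\<forall>J y. pr2 J P' y = pr2 J P y)))"

definition joint_meas ::
  "('m \<Rightarrow> 'p \<Rightarrow> bool \<Rightarrow> real) \<Rightarrow> ('j \<Rightarrow> 'p \<Rightarrow> bool \<times> bool \<Rightarrow> real)
     \<Rightarrow> 'j set \<Rightarrow> 'm set \<Rightarrow> 'm set \<Rightarrow> bool" where
  "joint_meas pr1 pr2 MJ Mi Mj \<longleftrightarrow>
     (\<forall>J\<in>MJ. \<forall>P.
        (\<forall>m\<in>Mi. \<forall>x. pr1 m P x = pr2 J P (x, False) + pr2 J P (x, True)) \<and>
        (\<forall>m\<in>Mj. \<forall>y. pr1 m P y = pr2 J P (False, y) + pr2 J P (True, y)))"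

definition response_funs :: "('m \<Rightarrow> 'x::finite \<Rightarrow> 'l \<Rightarrow> real) \<Rightarrow> bool" where
  "response_funs \<xi> \<longleftrightarrow> (\<forall>m l. (\<forall>x. 0 \<le> \<xi> m x l) \<and> (\<Sum>x\<in>UNIV. \<xi> m x l) = 1)"

definition reproduces :: "('m \<Rightarrow> 'p \<Rightarrow> 'x \<Rightarrow> real) \<Rightarrow> ('p \<Rightarrow> 'l pmf) \<Rightarrow> ('m \<Rightarrow> 'x \<Rightarrow> 'l \<Rightarrow> real) \<Rightarrow> bool" where
  "reproduces pr mu \<xi> \<longleftrightarrow>
     (\<forall>m P x. pr m P x = measure_pmf.expectation (mu P) (\<lambda>l. \<xi> m x l))"

definition meas_noncontextual :: "('m \<Rightarrow> 'x \<Rightarrow> 'l \<Rightarrow> real) \<Rightarrow> 'm set \<Rightarrow> bool" where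
  "meas_noncontextual \<xi> A \<longleftrightarrow> (\<forall>m\<in>A. \<forall>m'\<in>A. \<xi> m = \<xi> m')"

definition outcome_deterministic :: "('m \<Rightarrow> 'x \<Rightarrow> 'l \<Rightarrow> real) \<Rightarrow> 'm set \<Rightarrow> bool" where
  "outcome_deterministic \<xi> A \<longleftrightarrow> (\<forall>m\<in>A. \<forall>x l. \<xi> m x l = 0 \<or> \<xi> m x l = 1)"

end

theory Submission
  imports Defs
begin

text \<open>On every ontic state in the support of the preparation, perfect anticorrelation forces the
joint responses to vanish on the diagonal outcomes, so for each joint measurement the two
coarse-grained responses to outcome 0 add up to 1. Noncontextuality identifies these responses
across the three joint measurements, giving values a, b, c with a + b = a + c = b + c = 1.
Then a = 1/2, which contradicts outcome determinism.\<close>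

lemma pmf_expectation_nonneg_eq_0_imp_zero:
  fixes f :: "'l \<Rightarrow> real"
  assumes "integrable (measure_pmf p) f" "\<And>l. 0 \<le> f l"
    and "measure_pmf.expectation p f = 0" "l \<in> set_pmf p"
  shows "f l = 0"
proof -
  have "AE x in measure_pmf p. f x = 0"
    using integral_nonneg_eq_0_iff_AE[OF assms(1)] assms(2,3) by auto
  then show ?thesis
    using assms(4) by (simp add: AE_measure_pmf_iff)
qed

lemma sum_UNIV_bool_prod:
  "(\<Sum>x\<in>UNIV. g x) = g (False, False) + g (False, True) + g (True, False) + g (True, True)"
  by (simp add: UNIV_Times_UNIV[symmetric] sum.cartesian_product[symmetric] UNIV_bool add.assoc
      del: UNIV_Times_UNIV)

lemma response_funs_nonneg: "response_funs \<xi> \<Longrightarrow> 0 \<le> \<xi> m x l"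
  unfolding response_funs_def by blast

lemma response_funs_le_1:
  assumes "response_funs \<xi>"
  shows "\<xi> m x l \<le> 1"
proof -
  have "\<xi> m x l \<le> (\<Sum>y\<in>UNIV. \<xi> m y l)"
    by (rule member_le_sum) (use response_funs_nonneg[OF assms] in auto)
  also have "\<dots> = 1"
    using assms unfolding response_funs_def by blast
  finally show ?thesis .
qed

lemma response_funs_integrable:
  "response_funs \<xi> \<Longrightarrow> integrable (measure_pmf p) (\<xi> m x)"
  by (rule measure_pmf.integrable_const_bound[where B = 1])
    (auto simp: response_funs_nonneg response_funs_le_1)

lemma response_funs_bool_prod_sum:
  fixes \<xi> :: "'m \<Rightarrow> bool \<times> bool \<Rightarrow> 'l \<Rightarrow> real"
  assumes "response_funs \<xi>"
  shows "\<xi> m (False, False) l + \<xi> m (False, True) l + \<xi> m (True, False) l + \<xi> m (True, True) l = 1"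
  using assms unfolding response_funs_def by (simp add: sum_UNIV_bool_prod)

lemma anticorrelated_response_diagonal_vanishes:
  fixes \<xi> :: "'m \<Rightarrow> bool \<times> bool \<Rightarrow> 'l \<Rightarrow> real"
  assumes rf: "response_funs \<xi>"
    and anti: "measure_pmf.expectation p (\<xi> m (False, True))
               + measure_pmf.expectation p (\<xi> m (True, False)) = 1"
    and l: "l \<in> set_pmf p"
  shows "\<xi> m (False, False) l = 0" "\<xi> m (True, True) l = 0"
proof -
  define diag where "diag l = \<xi> m (False, False) l + \<xi> m (True, True) l" for l
  have int: "integrable (measure_pmf p) diag"
    unfolding diag_def by (simp add: response_funs_integrable[OF rf])
  have nonneg: "\<And>l. 0 \<le> diag l"
    unfolding diag_def by (simp add: response_funs_nonneg[OF rf])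
  have "diag = (\<lambda>l. 1 - \<xi> m (False, True) l - \<xi> m (True, False) l)"
    using response_funs_bool_prod_sum[OF rf] by (auto simp: diag_def fun_eq_iff algebra_simps)
  then have "measure_pmf.expectation p diag = 0"
    using anti by (simp add: response_funs_integrable[OF rf])
  then have "diag l = 0"
    using pmf_expectation_nonneg_eq_0_imp_zero[OF int nonneg _ l] by blast
  then show "\<xi> m (False, False) l = 0" "\<xi> m (True, True) l = 0"
    using response_funs_nonneg[OF rf, of m "(False, False)" l]
      response_funs_nonneg[OF rf, of m "(True, True)" l]
    unfolding diag_def by linarith+
qed

lemma meas_class_memberI:
  assumes "meas_class pr A" "m0 \<in> A" "\<And>P x. pr m P x = pr m0 P x"
  shows "m \<in> A"
  using assms unfolding meas_class_def by blast

lemma joint_meas_fst_marginal_in_class: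
  assumes "joint_meas pr1 pr2 MJ Mi Mj" "meas_class pr1 Mi" "J \<in> MJ"
    and "\<And>P x. pr1 m P x = pr2 J P (x, False) + pr2 J P (x, True)"
  shows "m \<in> Mi"
proof -
  obtain m0 where m0: "m0 \<in> Mi"
    using assms(2) unfolding meas_class_def by blast
  with assms(1,3) have "pr1 m0 P x = pr2 J P (x, False) + pr2 J P (x, True)" for P x
    unfolding joint_meas_def by blast
  then show ?thesis
    using meas_class_memberI[OF assms(2) m0] assms(4) by simp
qed

lemma joint_meas_snd_marginal_in_class:
  assumes "joint_meas pr1 pr2 MJ Mi Mj" "meas_class pr1 Mj" "J \<in> MJ"
    and "\<And>P y. pr1 m P y = pr2 J P (False, y) + pr2 J P (True, y)"
  shows "m \<in> Mj"
proof -
  obtain m0 where m0: "m0 \<in> Mj"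
    using assms(2) unfolding meas_class_def by blast
  with assms(1,3) have "pr1 m0 P y = pr2 J P (False, y) + pr2 J P (True, y)" for P y
    unfolding joint_meas_def by blast
  then show ?thesis
    using meas_class_memberI[OF assms(2) m0] assms(4) by simp
qed

lemma anticorrelated_marginal_responses_complementary:
  fixes \<xi> :: "'j \<Rightarrow> bool \<times> bool \<Rightarrow> 'l \<Rightarrow> real"
  assumes rf: "response_funs \<xi>" and rep: "reproduces pr2 mu \<xi>"
    and anti: "pr2 J P (False, True) = 1/2" "pr2 J P (True, False) = 1/2"
    and l: "l \<in> set_pmf (mu P)"
  shows "(\<xi> J (False, False) l + \<xi> J (False, True) l)
       + (\<xi> J (False, False) l + \<xi> J (True, False) l) = 1"
proof -
  have "measure_pmf.expectation (mu P) (\<xi> J (False, True))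
      + measure_pmf.expectation (mu P) (\<xi> J (True, False)) = 1"
    using rep anti unfolding reproduces_def by simp
  then have "\<xi> J (False, False) l = 0" "\<xi> J (True, True) l = 0"
    using anticorrelated_response_diagonal_vanishes[OF rf _ l] by blast+
  then show ?thesis
    using response_funs_bool_prod_sum[OF rf, of J l] by simp
qed

lemma no_noncontextual_deterministic_model:
  fixes \<xi>1 :: "'m \<Rightarrow> bool \<Rightarrow> 'l \<Rightarrow> real" and \<xi>2 :: "'j \<Rightarrow> bool \<times> bool \<Rightarrow> 'l \<Rightarrow> real"
  assumes cg1_stat: "\<And>J P x. pr1 (cg1 J) P x = pr2 J P (x, False) + pr2 J P (x, True)"
    and cg2_stat: "\<And>J P y. pr1 (cg2 J) P y = pr2 J P (False, y) + pr2 J P (True, y)"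
    and meas: "meas_class pr1 M1" "meas_class pr1 M2" "meas_class pr1 M3"
    and jmeas: "meas_class pr2 M12" "meas_class pr2 M13" "meas_class pr2 M23"
    and joint: "joint_meas pr1 pr2 M12 M1 M2" "joint_meas pr1 pr2 M13 M1 M3"
               "joint_meas pr1 pr2 M23 M2 M3"
    and prep: "prep_class pr1 pr2 Pstar"
    and stats: "\<And>P J. P \<in> Pstar \<Longrightarrow> J \<in> M12 \<union> M13 \<union> M23 \<Longrightarrow>
                  pr2 J P (False, True) = 1/2 \<and> pr2 J P (True, False) = 1/2"
    and rf2: "response_funs \<xi>2" and rep2: "reproduces pr2 mu \<xi>2"
    and cg1_resp: "\<forall>J x l. \<xi>1 (cg1 J) x l = \<xi>2 J (x, False) l + \<xi>2 J (x, True) l"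
    and cg2_resp: "\<forall>J y l. \<xi>1 (cg2 J) y l = \<xi>2 J (False, y) l + \<xi>2 J (True, y) l"
    and ncd: "\<forall>A\<in>{M1, M2, M3}. meas_noncontextual \<xi>1 A \<and> outcome_deterministic \<xi>1 A"
  shows False
proof -
  obtain J12 J13 J23 where J: "J12 \<in> M12" "J13 \<in> M13" "J23 \<in> M23"
    using jmeas unfolding meas_class_def by blast
  obtain P where P: "P \<in> Pstar"
    using prep unfolding prep_class_def by blast
  obtain l where l: "l \<in> set_pmf (mu P)"
    using set_pmf_not_empty by fastforce
  have "cg1 J12 \<in> M1" "cg1 J13 \<in> M1" "cg1 J23 \<in> M2"
    using joint_meas_fst_marginal_in_class[OF joint(1) meas(1) J(1) cg1_stat]
      joint_meas_fst_marginal_in_class[OF joint(2) meas(1) J(2) cg1_stat]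
      joint_meas_fst_marginal_in_class[OF joint(3) meas(2) J(3) cg1_stat] .
  moreover have "cg2 J12 \<in> M2" "cg2 J13 \<in> M3" "cg2 J23 \<in> M3"
    using joint_meas_snd_marginal_in_class[OF joint(1) meas(2) J(1) cg2_stat]
      joint_meas_snd_marginal_in_class[OF joint(2) meas(3) J(2) cg2_stat]
      joint_meas_snd_marginal_in_class[OF joint(3) meas(3) J(3) cg2_stat] .
  ultimately have same: "\<xi>1 (cg1 J13) = \<xi>1 (cg1 J12)" "\<xi>1 (cg1 J23) = \<xi>1 (cg2 J12)"
      "\<xi>1 (cg2 J23) = \<xi>1 (cg2 J13)"
    using ncd unfolding meas_noncontextual_def by (metis insert_iff)+
  have det: "\<xi>1 (cg1 J12) False l = 0 \<or> \<xi>1 (cg1 J12) False l = 1"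
    using ncd \<open>cg1 J12 \<in> M1\<close> unfolding outcome_deterministic_def by blast
  have complementary: "\<xi>1 (cg1 J) False l + \<xi>1 (cg2 J) False l = 1"
    if "J \<in> M12 \<union> M13 \<union> M23" for J
    using anticorrelated_marginal_responses_complementary[OF rf2 rep2 _ _ l] stats[OF P that]
      cg1_resp cg2_resp by simp
  have "\<xi>1 (cg1 J12) False l + \<xi>1 (cg2 J12) False l = 1"
    "\<xi>1 (cg1 J12) False l + \<xi>1 (cg2 J13) False l = 1"
    "\<xi>1 (cg2 J12) False l + \<xi>1 (cg2 J13) False l = 1"
    using complementary[of J12] complementary[of J13] complementary[of J23] J
    unfolding same by simp_all
  with det show False
    by linarith
qed

theorem corollary2:
  fixes pr1 :: "'m \<Rightarrow> 'p \<Rightarrow> bool \<Rightarrow> real"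
    and pr2 :: "'j \<Rightarrow> 'p \<Rightarrow> bool \<times> bool \<Rightarrow> real"
    and cg1 cg2 :: "'j \<Rightarrow> 'm"
    and M1 M2 M3 :: "'m set"
    and M12 M13 M23 :: "'j set"
    and Pstar :: "'p set"
  assumes cg1_stat: "\<And>J P x. pr1 (cg1 J) P x = pr2 J P (x, False) + pr2 J P (x, True)"
    and cg2_stat: "\<And>J P y. pr1 (cg2 J) P y = pr2 J P (False, y) + pr2 J P (True, y)"
    and meas: "meas_class pr1 M1" "meas_class pr1 M2" "meas_class pr1 M3"
    and jmeas: "meas_class pr2 M12" "meas_class pr2 M13" "meas_class pr2 M23"
    and joint: "joint_meas pr1 pr2 M12 M1 M2" "joint_meas pr1 pr2 M13 M1 M3"
               "joint_meas pr1 pr2 M23 M2 M3"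
    and prep: "prep_class pr1 pr2 Pstar"
    and stats: "\<And>P J. P \<in> Pstar \<Longrightarrow> J \<in> M12 \<union> M13 \<union> M23 \<Longrightarrow>
                  pr2 J P (False, True) = 1/2 \<and> pr2 J P (True, False) = 1/2"
  shows "\<not> (\<exists>(mu :: 'p \<Rightarrow> 'l pmf) (\<xi>1 :: 'm \<Rightarrow> bool \<Rightarrow> 'l \<Rightarrow> real)
                (\<xi>2 :: 'j \<Rightarrow> bool \<times> bool \<Rightarrow> 'l \<Rightarrow> real).
           response_funs \<xi>1 \<and> response_funs \<xi>2 \<and>
           reproduces pr1 mu \<xi>1 \<and> reproduces pr2 mu \<xi>2 \<and>
           (\<forall>J x l. \<xi>1 (cg1 J) x l = \<xi>2 J (x, False) l + \<xi>2 J (x, True) l) \<and>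
           (\<forall>J y l. \<xi>1 (cg2 J) y l = \<xi>2 J (False, y) l + \<xi>2 J (True, y) l) \<and>
           (\<forall>A\<in>{M1, M2, M3}. meas_noncontextual \<xi>1 A \<and> outcome_deterministic \<xi>1 A) \<and>
           (\<forall>A\<in>{M12, M13, M23}. meas_noncontextual \<xi>2 A \<and> outcome_deterministic \<xi>2 A))"
  using no_noncontextual_deterministic_model[OF cg1_stat cg2_stat meas jmeas joint prep stats]
  by blast

end
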